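(* Fix $n\ge2$, points $\mathbf{X}_1,\dots,\mathbf{X}_n\in\mathbb{T}_d$, an index $i$, and assume $X_{j\ell}\in(a_\ell,b_\ell)$ for all $j\ne i$ and all $\ell$. Let $\alpha>3/2$ and $\beta_1,\dots,\beta_d>0$. Partition $\{1,\dots,d\}$ into $\mathbb{I}_a=\{\ell:X_{i\ell}=a_\ell\}$, $\mathbb{I}_b=\{\ell:X_{i\ell}=b_\ell\}$, $\mathbb{I}^c=\{\ell:X_{i\ell}\in(a_\ell,b_\ell)\}$. For $j\ne i$ define: for $\ell\in\mathbb{I}^c$: $B_{j\ell}=\beta_\ell-(b_\ell-a_\ell)^{-1}\big[(X_{i\ell}-a_\ell)\log\frac{X_{j\ell}-a_\ell}{X_{i\ell}-a_\ell}+(b_\ell-X_{i\ell})\log\frac{b_\ell-X_{j\ell}}{b_\ell-X_{i\ell}}\big]$, $A_{j\ell}=\{2\pi(X_{i\ell}-a_\ell)(b_\ell-X_{i\ell})\}^{-1/2}\beta_\ell^\alpha\Gamma(\alpha+\tfrac12)B_{j\ell}^{-\alpha-1/2}$, $C_{j\ell}=\{2\pi(X_{i\ell}-a_\ell)(b_\ell-X_{i\ell})\}^{-1/2}\beta_\ell^\alpha\Gamma(\alpha-\tfrac12)B_{j\ell}^{-\alpha+1/2}$, and set $M_{j\ell}(t)=A_{j\ell}IG_{\alpha+1/2,B_{j\ell}}(t)+C_{j\ell}IG_{\alpha-1/2,B_{j\ell}}(t)$, $w_{j\ell}=A_{j\ell}+C_{j\ell}$, $\mu_{j\ell}=B_{j\ell}\big(\frac{A_{j\ell}}{\alpha-1/2}+\frac{C_{j\ell}}{\alpha-3/2}\big)$;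 for $\ell\in\mathbb{I}_a$: $E_{j\ell}=\beta_\ell-\log\frac{b_\ell-X_{j\ell}}{b_\ell-a_\ell}$, $F_{j\ell}=\beta_\ell^\alpha(b_\ell-a_\ell)^{-1}\Gamma(\alpha)E_{j\ell}^{-\alpha}$, $H_{j\ell}=\beta_\ell^\alpha(b_\ell-a_\ell)^{-1}\Gamma(\alpha+1)E_{j\ell}^{-\alpha-1}$, $M_{j\ell}(t)=F_{j\ell}IG_{\alpha,E_{j\ell}}(t)+H_{j\ell}IG_{\alpha+1,E_{j\ell}}(t)$, $w_{j\ell}=F_{j\ell}+H_{j\ell}$, $\mu_{j\ell}=E_{j\ell}\big(\frac{F_{j\ell}}{\alpha-1}+\frac{H_{j\ell}}{\alpha}\big)$; for $\ell\in\mathbb{I}_b$: $G_{j\ell}=\beta_\ell-\log\frac{X_{j\ell}-a_\ell}{b_\ell-a_\ell}$, $J_{j\ell}=\beta_\ell^\alpha(b_\ell-a_\ell)^{-1}\Gamma(\alpha)G_{j\ell}^{-\alpha}$, $K_{j\ell}=\beta_\ell^\alpha(b_\ell-a_\ell)^{-1}\Gamma(\alpha+1)G_{j\ell}^{-\alpha-1}$, $M_{j\ell}(t)=J_{j\ell}IG_{\alpha,G_{j\ell}}(t)+K_{j\ell}IG_{\alpha+1,G_{j\ell}}(t)$, $w_{j\ell}=J_{j\ell}+K_{j\ell}$, $\mu_{j\ell}=G_{j\ell}\big(\frac{J_{j\ell}}{\alpha-1}+\frac{K_{j\ell}}{\alpha}\big)$. Let $D_i=\sum_{j\ne i}\prod_{\ell=1}^dw_{j\ell}$.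 Then (i) the posterior density defined in the context is $$\pi(\boldsymbol{h}\mid\mathbf{X}_i)=\frac1{D_i}\sum_{j=1,j\ne i}^n\prod_{\ell=1}^dM_{j\ell}(h_\ell),\qquad\boldsymbol{h}\in(0,\infty)^d;$$ (ii) the posterior mean (Bayes estimator under quadratic loss) $\widetilde{\boldsymbol h}_i=\mathbb{E}(\boldsymbol h\mid\mathbf{X}_i)$ has components $$\widetilde h_{im}=\frac1{D_i}\sum_{j=1,j\ne i}^n\Big(\prod_{\ell\ne m}w_{j\ell}\Big)\mu_{jm},\qquad m=1,\dots,d.$$
   Context: $\mathbb{T}_d=\prod_{\ell=1}^d[a_\ell,b_\ell]$, $-\infty<a_\ell<b_\ell<\infty$; $\mathbf{X}_j=(X_{j1},\dots,X_{jd})^\top$. For $a'>0,b'>0$, $IG_{a',b'}(t)=\frac{b'^{a'}}{\Gamma(a')}t^{-a'-1}e^{-b'/t}\mathbf 1_{(0,\infty)}(t)$ is the inverse-gamma density. The extended-beta kernel is $EB_{x,h,a,b}(u)=\frac{(u-a)^{(x-a)/\{(b-a)h\}}(b-u)^{(b-x)/\{(b-a)h\}}}{(b-a)^{1+1/h}B\{1+(x-a)/((b-a)h),1+(b-x)/((b-a)h)\}}\mathbf 1_{[a,b]}(u)$ ($B$ the beta function, $0^0=1$); in particular $EB_{a,h,a,b}(u)=(1+1/h)(b-u)^{1/h}(b-a)^{-1-1/h}$ and $EB_{b,h,a,b}(u)=(1+1/h)(u-a)^{1/h}(b-a)^{-1-1/h}$ on $[a,b]$. For interior $x\in(a,b)$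 the paper replaces $EB_{x,h,a,b}$ by its large-$1/h$ Stirling approximation $$\widetilde{EB}_{x,h,a,b}(u)=\frac{(1+h)\,h^{-1/2}}{\sqrt{2\pi(x-a)(b-x)}}\exp\Big\{\frac{1}{(b-a)h}\Big[(x-a)\log\frac{u-a}{x-a}+(b-x)\log\frac{b-u}{b-x}\Big]\Big\},\quad u\in(a,b).$$ For $\boldsymbol h=(h_1,\dots,h_d)\in(0,\infty)^d$ let $\kappa_\ell(u;h_\ell)=EB_{X_{i\ell},h_\ell,a_\ell,b_\ell}(u)$ if $\ell\in\mathbb{I}_a\cup\mathbb{I}_b$ and $\kappa_\ell(u;h_\ell)=\widetilde{EB}_{X_{i\ell},h_\ell,a_\ell,b_\ell}(u)$ if $\ell\in\mathbb{I}^c$; the (approximate) leave-one-out estimator is $\widehat f_{-i}(\mathbf X_i\mid\boldsymbol h)=\frac1{n-1}\sum_{j\ne i}\prod_{\ell=1}^d\kappa_\ell(X_{j\ell};h_\ell)$. The prior on the adaptive bandwidth vector is $\pi(\boldsymbol h)=\prod_{\ell=1}^dIG_{\alpha,\beta_\ell}(h_\ell)$ and the posterior is $\pi(\boldsymbol h\mid\mathbf X_i)=\widehat f_{-i}(\mathbf X_i\mid\boldsymbol h)\pi(\boldsymbol h)\big/\int_{(0,\infty)^d}\widehat f_{-i}(\mathbf X_i\mid\boldsymbol g)\pi(\boldsymbol g)d\boldsymbol g$. *)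

theory Defs
  imports "HOL-Analysis.Analysis"
begin

text \<open>Real power with the convention 0 to the power 0 equals 1 (Isabelle's powr gives 0 there).\<close>
definition zpow :: "real \<Rightarrow> real \<Rightarrow> real" where
  "zpow x e = (if e = 0 then 1 else x powr e)"

definition IG :: "real \<Rightarrow> real \<Rightarrow> real \<Rightarrow> real" where
  "IG a' b' t = (if 0 < t then b' powr a' / Gamma a' * t powr (- a' - 1) * exp (- b' / t) else 0)"

definition EB :: "real \<Rightarrow> real \<Rightarrow> real \<Rightarrow> real \<Rightarrow> real \<Rightarrow> real" where
  "EB x h a b u =
     (if a \<le> u \<and> u \<le> b then
        zpow (u - a) ((x - a) / ((b - a) * h)) * zpow (b - u) ((b - x) / ((b - a) * h))
        / ((b - a) powr (1 + 1 / h) * Beta (1 + (x - a) / ((b - a) * h)) (1 + (b - x) / ((b - a) * h)))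
      else 0)"

text \<open>Stirling approximation of the extended-beta kernel (defined for u in (a,b), 0 elsewhere).\<close>
definition EBt :: "real \<Rightarrow> real \<Rightarrow> real \<Rightarrow> real \<Rightarrow> real \<Rightarrow> real" where
  "EBt x h a b u =
     (if a < u \<and> u < b then
        (1 + h) * h powr (- 1 / 2) / sqrt (2 * pi * (x - a) * (b - x))
        * exp (1 / ((b - a) * h) * ((x - a) * ln ((u - a) / (x - a)) + (b - x) * ln ((b - u) / (b - x))))
      else 0)"

definition kappa :: "real \<Rightarrow> real \<Rightarrow> real \<Rightarrow> real \<Rightarrow> real \<Rightarrow> real" where
  "kappa a b xi h u = (if xi = a \<or> xi = b then EB xi h a b u else EBt xi h a b u)"

definition fhat_loo :: "nat \<Rightarrow> (nat \<Rightarrow> real^'d) \<Rightarrow> nat \<Rightarrow> real^'d \<Rightarrow> real^'d \<Rightarrow> real^'d \<Rightarrow> real" where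
  "fhat_loo n X i a b h =
     1 / (real n - 1) * (\<Sum>j\<in>{1..n} - {i}. \<Prod>l\<in>UNIV. kappa (a$l) (b$l) (X i $ l) (h$l) (X j $ l))"

definition prior :: "real \<Rightarrow> real^'d \<Rightarrow> real^'d \<Rightarrow> real" where
  "prior \<alpha> \<beta> h = (\<Prod>l\<in>UNIV. IG \<alpha> (\<beta>$l) (h$l))"

definition orthant :: "(real^'d) set" where
  "orthant = {h. \<forall>l. 0 < h$l}"

definition posterior :: "nat \<Rightarrow> (nat \<Rightarrow> real^'d) \<Rightarrow> nat \<Rightarrow> real^'d \<Rightarrow> real^'d \<Rightarrow> real \<Rightarrow> real^'d \<Rightarrow> real^'d \<Rightarrow> real" where
  "posterior n X i a b \<alpha> \<beta> h =
     fhat_loo n X i a b h * prior \<alpha> \<beta> h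
     / integral orthant (\<lambda>g. fhat_loo n X i a b g * prior \<alpha> \<beta> g)"

definition posterior_mean :: "nat \<Rightarrow> (nat \<Rightarrow> real^'d) \<Rightarrow> nat \<Rightarrow> real^'d \<Rightarrow> real^'d \<Rightarrow> real \<Rightarrow> real^'d \<Rightarrow> 'd \<Rightarrow> real" where
  "posterior_mean n X i a b \<alpha> \<beta> m =
     integral orthant (\<lambda>h. h$m * posterior n X i a b \<alpha> \<beta> h)"

definition Bq :: "real \<Rightarrow> real \<Rightarrow> real \<Rightarrow> real \<Rightarrow> real \<Rightarrow> real \<Rightarrow> real" where
  "Bq \<alpha> \<beta> a b xi xj = \<beta> - ((xi - a) * ln ((xj - a) / (xi - a)) + (b - xi) * ln ((b - xj) / (b - xi))) / (b - a)"
definition Aq :: "real \<Rightarrow> real \<Rightarrow> real \<Rightarrow> real \<Rightarrow> real \<Rightarrow> real \<Rightarrow> real" where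
  "Aq \<alpha> \<beta> a b xi xj = (2 * pi * (xi - a) * (b - xi)) powr (- 1 / 2) * \<beta> powr \<alpha> * Gamma (\<alpha> + 1 / 2)
      * Bq \<alpha> \<beta> a b xi xj powr (- \<alpha> - 1 / 2)"
definition Cq :: "real \<Rightarrow> real \<Rightarrow> real \<Rightarrow> real \<Rightarrow> real \<Rightarrow> real \<Rightarrow> real" where
  "Cq \<alpha> \<beta> a b xi xj = (2 * pi * (xi - a) * (b - xi)) powr (- 1 / 2) * \<beta> powr \<alpha> * Gamma (\<alpha> - 1 / 2)
      * Bq \<alpha> \<beta> a b xi xj powr (- \<alpha> + 1 / 2)"
definition Eq :: "real \<Rightarrow> real \<Rightarrow> real \<Rightarrow> real \<Rightarrow> real \<Rightarrow> real \<Rightarrow> real" where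
  "Eq \<alpha> \<beta> a b xi xj = \<beta> - ln ((b - xj) / (b - a))"
definition Fq :: "real \<Rightarrow> real \<Rightarrow> real \<Rightarrow> real \<Rightarrow> real \<Rightarrow> real \<Rightarrow> real" where
  "Fq \<alpha> \<beta> a b xi xj = \<beta> powr \<alpha> / (b - a) * Gamma \<alpha> * Eq \<alpha> \<beta> a b xi xj powr (- \<alpha>)"
definition Hq :: "real \<Rightarrow> real \<Rightarrow> real \<Rightarrow> real \<Rightarrow> real \<Rightarrow> real \<Rightarrow> real" where
  "Hq \<alpha> \<beta> a b xi xj = \<beta> powr \<alpha> / (b - a) * Gamma (\<alpha> + 1) * Eq \<alpha> \<beta> a b xi xj powr (- \<alpha> - 1)"
definition Gq :: "real \<Rightarrow> real \<Rightarrow> real \<Rightarrow> real \<Rightarrow> real \<Rightarrow> real \<Rightarrow> real" where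
  "Gq \<alpha> \<beta> a b xi xj = \<beta> - ln ((xj - a) / (b - a))"
definition Jq :: "real \<Rightarrow> real \<Rightarrow> real \<Rightarrow> real \<Rightarrow> real \<Rightarrow> real \<Rightarrow> real" where
  "Jq \<alpha> \<beta> a b xi xj = \<beta> powr \<alpha> / (b - a) * Gamma \<alpha> * Gq \<alpha> \<beta> a b xi xj powr (- \<alpha>)"
definition Kq :: "real \<Rightarrow> real \<Rightarrow> real \<Rightarrow> real \<Rightarrow> real \<Rightarrow> real \<Rightarrow> real" where
  "Kq \<alpha> \<beta> a b xi xj = \<beta> powr \<alpha> / (b - a) * Gamma (\<alpha> + 1) * Gq \<alpha> \<beta> a b xi xj powr (- \<alpha> - 1)"

definition Mq :: "real \<Rightarrow> real \<Rightarrow> real \<Rightarrow> real \<Rightarrow> real \<Rightarrow> real \<Rightarrow> real \<Rightarrow> real" where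
  "Mq \<alpha> \<beta> a b xi xj t =
     (if xi = a then Fq \<alpha> \<beta> a b xi xj * IG \<alpha> (Eq \<alpha> \<beta> a b xi xj) t
                    + Hq \<alpha> \<beta> a b xi xj * IG (\<alpha> + 1) (Eq \<alpha> \<beta> a b xi xj) t
      else if xi = b then Jq \<alpha> \<beta> a b xi xj * IG \<alpha> (Gq \<alpha> \<beta> a b xi xj) t
                    + Kq \<alpha> \<beta> a b xi xj * IG (\<alpha> + 1) (Gq \<alpha> \<beta> a b xi xj) t
      else Aq \<alpha> \<beta> a b xi xj * IG (\<alpha> + 1 / 2) (Bq \<alpha> \<beta> a b xi xj) t
         + Cq \<alpha> \<beta> a b xi xj * IG (\<alpha> - 1 / 2) (Bq \<alpha> \<beta> a b xi xj) t)"
definition wq :: "real \<Rightarrow> real \<Rightarrow> real \<Rightarrow> real \<Rightarrow> real \<Rightarrow> real \<Rightarrow> real" where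
  "wq \<alpha> \<beta> a b xi xj =
     (if xi = a then Fq \<alpha> \<beta> a b xi xj + Hq \<alpha> \<beta> a b xi xj
      else if xi = b then Jq \<alpha> \<beta> a b xi xj + Kq \<alpha> \<beta> a b xi xj
      else Aq \<alpha> \<beta> a b xi xj + Cq \<alpha> \<beta> a b xi xj)"
definition muq :: "real \<Rightarrow> real \<Rightarrow> real \<Rightarrow> real \<Rightarrow> real \<Rightarrow> real \<Rightarrow> real" where
  "muq \<alpha> \<beta> a b xi xj =
     (if xi = a then Eq \<alpha> \<beta> a b xi xj * (Fq \<alpha> \<beta> a b xi xj / (\<alpha> - 1) + Hq \<alpha> \<beta> a b xi xj / \<alpha>)
      else if xi = b then Gq \<alpha> \<beta> a b xi xj * (Jq \<alpha> \<beta> a b xi xj / (\<alpha> - 1) + Kq \<alpha> \<beta> a b xi xj / \<alpha>)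
      else Bq \<alpha> \<beta> a b xi xj * (Aq \<alpha> \<beta> a b xi xj / (\<alpha> - 1 / 2) + Cq \<alpha> \<beta> a b xi xj / (\<alpha> - 3 / 2)))"

end

theory Submission
  imports Defs
begin

text \<open>For each coordinate, the kernel value times the inverse-gamma prior density is, up to the
  factor \<open>1 / Gamma \<alpha>\<close>, a nonnegative combination of two inverse-gamma densities with a common
  scale: the kernel contributes a factor \<open>h powr (- c) * exp (s / h)\<close>, which moves the prior's
  shape by \<open>c\<close> and its scale from \<open>\<beta>\<close> to \<open>\<beta> - s\<close>. The leave-one-out numerator is therefore a
  sum over \<open>j\<close> of products of such one-dimensional mixtures, and Tonelli's theorem reduces its
  integral and its first moments over the orthant to products of one-dimensional masses and
  means; an inverse-gamma density with shape \<open>a\<close> and scale \<open>B\<close> has mass 1 and mean \<open>B / (a - 1)\<close>.\<close>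

section \<open>Integrals of coordinatewise products\<close>

lemma has_integral_prod_coordinates:
  fixes \<phi> :: "'d::finite \<Rightarrow> real \<Rightarrow> real" and I :: "'d \<Rightarrow> real"
  assumes meas: "\<And>l. \<phi> l \<in> borel_measurable borel"
    and nonneg: "\<And>l t. 0 \<le> \<phi> l t"
    and int: "\<And>l. (\<phi> l has_integral I l) UNIV"
  shows "((\<lambda>h::real^'d. \<Prod>l\<in>UNIV. \<phi> l (h$l)) has_integral (\<Prod>l\<in>UNIV. I l)) UNIV"
proof -
  have I_nonneg: "0 \<le> I l" for l
    using has_integral_nonneg[OF int] nonneg by auto
  define f where "f b = \<phi> (THE l. axis l 1 = b)" for b :: "real^'d"
  have f_axis: "f (axis l 1) = \<phi> l" for l
    unfolding f_def by (rule arg_cong[of _ _ \<phi>], rule the_equality) (auto simp: axis_eq_axis)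
  have Basis_eq: "(Basis :: (real^'d) set) = (\<lambda>l. axis l 1) ` UNIV"
    by (auto simp: Basis_vec_def)
  have prod_Basis: "(\<Prod>b\<in>Basis. g b) = (\<Prod>l\<in>UNIV. g (axis l 1))" for g :: "real^'d \<Rightarrow> ennreal"
    unfolding Basis_eq by (subst prod.reindex) (auto simp: inj_on_def axis_eq_axis)
  have [measurable]: "b \<in> Basis \<Longrightarrow> f b \<in> borel_measurable borel" for b
    using meas by (auto simp: Basis_eq f_axis)
  have "(\<integral>\<^sup>+h. ennreal (\<Prod>l\<in>UNIV. \<phi> l (h$l)) \<partial>lborel) = (\<integral>\<^sup>+h. (\<Prod>b\<in>Basis. ennreal (f b (h \<bullet> b))) \<partial>lborel)"
    by (simp add: prod_Basis f_axis cart_eq_inner_axis prod_ennreal nonneg)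
  also have "\<dots> = (\<Prod>b\<in>Basis. (\<integral>\<^sup>+x. ennreal (f b x) \<partial>lborel))"
    using nonneg by (intro nn_integral_lborel_prod) (auto simp: Basis_eq f_axis)
  also have "\<dots> = ennreal (\<Prod>l\<in>UNIV. I l)"
    using nn_integral_has_integral_lborel[OF meas nonneg int]
    by (simp add: prod_Basis f_axis prod_ennreal I_nonneg)
  finally show ?thesis
    using meas by (intro nn_integral_has_integral) (auto intro: prod_nonneg nonneg I_nonneg)
qed

lemma has_integral_coordinate_mult_prod:
  fixes M :: "'d::finite \<Rightarrow> real \<Rightarrow> real"
  assumes meas: "\<And>l. M l \<in> borel_measurable borel"
    and nonneg: "\<And>l t. 0 \<le> M l t" and vanish: "\<And>t. t \<le> 0 \<Longrightarrow> M m t = 0"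
    and int: "\<And>l. (M l has_integral w l) UNIV"
    and moment: "((\<lambda>t. t * M m t) has_integral \<mu>) UNIV"
  shows "((\<lambda>h::real^'d. h$m * (\<Prod>l\<in>UNIV. M l (h$l))) has_integral (\<Prod>l\<in>UNIV - {m}. w l) * \<mu>) UNIV"
proof -
  define \<phi> where "\<phi> l t = (if l = m then t * M l t else M l t)" for l t
  have "((\<lambda>h::real^'d. \<Prod>l\<in>UNIV. \<phi> l (h$l)) has_integral (\<Prod>l\<in>UNIV. if l = m then \<mu> else w l)) UNIV"
  proof (rule has_integral_prod_coordinates)
    show "\<phi> l \<in> borel_measurable borel" for l
      using meas[of m] unfolding \<phi>_def by (cases "l = m") (simp_all add: meas borel_measurable_times)
    show "0 \<le> \<phi> l t" for l t
      using nonneg vanish[of t] by (cases "t \<le> 0") (auto simp: \<phi>_def)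
    show "(\<phi> l has_integral (if l = m then \<mu> else w l)) UNIV" for l
      using int moment unfolding \<phi>_def by (cases "l = m") simp_all
  qed
  moreover have "(\<Prod>l\<in>UNIV. \<phi> l (h$l)) = h$m * (\<Prod>l\<in>UNIV. M l (h$l))" for h :: "real^'d"
  proof -
    have "(\<Prod>l\<in>UNIV. \<phi> l (h$l)) = \<phi> m (h$m) * (\<Prod>l\<in>UNIV - {m}. \<phi> l (h$l))"
      by (intro prod.remove) auto
    also have "(\<Prod>l\<in>UNIV - {m}. \<phi> l (h$l)) = (\<Prod>l\<in>UNIV - {m}. M l (h$l))"
      by (intro prod.cong) (auto simp: \<phi>_def)
    finally show ?thesis
      by (simp add: \<phi>_def prod.remove[of UNIV m "\<lambda>l. M l (h$l)"])
  qed
  moreover have "(\<Prod>l\<in>UNIV. if l = m then \<mu> else w l) = (\<Prod>l\<in>UNIV - {m}. w l) * \<mu>"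
  proof -
    have "(\<Prod>l\<in>UNIV. if l = m then \<mu> else w l) = \<mu> * (\<Prod>l\<in>UNIV - {m}. if l = m then \<mu> else w l)"
      by (subst prod.remove[of UNIV m]) auto
    also have "(\<Prod>l\<in>UNIV - {m}. if l = m then \<mu> else w l) = (\<Prod>l\<in>UNIV - {m}. w l)"
      by (intro prod.cong) auto
    finally show ?thesis
      by simp
  qed
  ultimately show ?thesis
    by simp
qed

lemma has_integral_orthantI:
  fixes f :: "real^'d \<Rightarrow> real"
  assumes "(f has_integral I) UNIV" and "\<And>h. h \<notin> orthant \<Longrightarrow> f h = 0"
  shows "(f has_integral I) orthant"
proof -
  have "(\<lambda>h. if h \<in> orthant then f h else 0) = f"
    using assms(2) by auto
  then show ?thesis
    using assms(1) has_integral_restrict_UNIV[of orthant f I] by simp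
qed

lemma has_integral_sum_prod_orthant:
  fixes M :: "'j \<Rightarrow> 'd::finite \<Rightarrow> real \<Rightarrow> real"
  assumes "finite S"
    and meas: "\<And>j l. j \<in> S \<Longrightarrow> M j l \<in> borel_measurable borel"
    and nonneg: "\<And>j l t. j \<in> S \<Longrightarrow> 0 \<le> M j l t"
    and vanish: "\<And>j l t. j \<in> S \<Longrightarrow> t \<le> 0 \<Longrightarrow> M j l t = 0"
    and int: "\<And>j l. j \<in> S \<Longrightarrow> (M j l has_integral w j l) UNIV"
    and moment: "\<And>j l. j \<in> S \<Longrightarrow> ((\<lambda>t. t * M j l t) has_integral \<mu> j l) UNIV"
  shows "((\<lambda>h. \<Sum>j\<in>S. \<Prod>l\<in>UNIV. M j l (h$l)) has_integral (\<Sum>j\<in>S. \<Prod>l\<in>UNIV. w j l)) orthant"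
    and "((\<lambda>h. h$m * (\<Sum>j\<in>S. \<Prod>l\<in>UNIV. M j l (h$l)))
          has_integral (\<Sum>j\<in>S. (\<Prod>l\<in>UNIV - {m}. w j l) * \<mu> j m)) orthant"
proof -
  have prod_vanish: "(\<Prod>l\<in>UNIV. M j l (h$l)) = 0" if "j \<in> S" "h \<notin> orthant" for j h
  proof -
    obtain l where "h$l \<le> 0"
      using \<open>h \<notin> orthant\<close> by (auto simp: orthant_def not_less)
    then show ?thesis
      using vanish[OF \<open>j \<in> S\<close>] by (intro prod_zero) auto
  qed
  show "((\<lambda>h. \<Sum>j\<in>S. \<Prod>l\<in>UNIV. M j l (h$l)) has_integral (\<Sum>j\<in>S. \<Prod>l\<in>UNIV. w j l)) orthant"
    using assms prod_vanish
    by (intro has_integral_orthantI has_integral_sum has_integral_prod_coordinates sum.neutral) auto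
  have "((\<lambda>h. \<Sum>j\<in>S. h$m * (\<Prod>l\<in>UNIV. M j l (h$l)))
          has_integral (\<Sum>j\<in>S. (\<Prod>l\<in>UNIV - {m}. w j l) * \<mu> j m)) orthant"
    using assms prod_vanish
    by (intro has_integral_orthantI has_integral_sum has_integral_coordinate_mult_prod sum.neutral) auto
  then show "((\<lambda>h. h$m * (\<Sum>j\<in>S. \<Prod>l\<in>UNIV. M j l (h$l)))
          has_integral (\<Sum>j\<in>S. (\<Prod>l\<in>UNIV - {m}. w j l) * \<mu> j m)) orthant"
    by (simp add: sum_distrib_left)
qed

section \<open>The inverse-gamma density\<close>

text \<open>Substituting \<open>t = B / s\<close> in Euler's integral for \<open>\<Gamma>(c)\<close>.\<close>
lemma has_integral_powr_exp_inverse: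
  fixes c B :: real
  assumes c: "0 < c" and B: "0 < B"
  shows "((\<lambda>t. t powr (- c - 1) * exp (- B / t)) has_integral B powr (- c) * Gamma c) {0<..}"
proof -
  define f where "f t = t powr (- c - 1) * exp (- B / t)" for t :: real
  define g where "g s = B / s" for s :: real
  define g' where "g' s = - B / s\<^sup>2" for s :: real
  have integrand_subst: "\<bar>g' s\<bar> * f (g s) = B powr (- c) * (s powr (c - 1) / exp s)" if s: "0 < s" for s
  proof -
    have "(B / s) powr (- c - 1) = B powr (- c) / B * (s powr (c - 1) * s\<^sup>2)"
      using s B by (simp add: powr_divide powr_minus powr_diff powr_add divide_simps)
        (simp add: powr_add[symmetric] power2_eq_square)
    then show ?thesis
      using s B by (simp add: f_def g_def g'_def exp_minus field_simps power2_eq_square)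
  qed
  have "((\<lambda>s. s powr (c - 1) / exp s) has_integral Gamma c) {0<..}"
    using Gamma_integral_real[OF c]
    by (subst has_integral_spike_set_eq[of _ "{0..}"]) (auto intro: negligible_subset[of "{0}"])
  from has_integral_mult_right[OF this, of "B powr (- c)"]
  have lhs: "((\<lambda>s. \<bar>g' s\<bar> * f (g s)) has_integral B powr (- c) * Gamma c) {0<..}"
    by (rule has_integral_eq[rotated]) (simp add: integrand_subst)
  have abs_int: "(\<lambda>s. \<bar>g' s\<bar> * f (g s)) absolutely_integrable_on {0<..}"
    using lhs by (intro nonnegative_absolutely_integrable_1) (auto simp: f_def)
  have deriv: "(g has_field_derivative g' s) (at s within {0<..})" if "s \<in> {0<..}" for s
    using that unfolding g_def g'_def by (auto intro!: derivative_eq_intros simp: power2_eq_square)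
  have inj: "inj_on g {0<..}"
    using B by (auto simp: inj_on_def g_def field_simps)
  have image: "g ` {0<..} = {0<..}"
  proof (intro equalityI subsetI)
    fix t :: real assume "t \<in> {0<..}"
    then show "t \<in> g ` {0<..}"
      using B by (intro image_eqI[of _ _ "B / t"]) (auto simp: g_def)
  qed (use B in \<open>auto simp: g_def\<close>)
  have "f absolutely_integrable_on g ` {0<..} \<and> integral (g ` {0<..}) f = B powr (- c) * Gamma c"
    using has_absolute_integral_change_of_variables_1'[of "{0<..}" g g' f] abs_int deriv inj lhs
    by (auto simp: integral_unique)
  then show ?thesis
    unfolding f_def[symmetric] image absolutely_integrable_on_def by (metis has_integral_integral)
qed

lemma IG_nonneg: "0 < a' \<Longrightarrow> 0 \<le> IG a' B t"
  unfolding IG_def by simp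

lemma IG_nonpos_eq_0: "t \<le> 0 \<Longrightarrow> IG a' B t = 0"
  unfolding IG_def by simp

lemma IG_measurable [measurable]: "IG a' B \<in> borel_measurable borel"
  unfolding IG_def by measurable

lemma IG_normalization:
  assumes "0 < a'" "0 < B" "0 < t"
  shows "Gamma a' * B powr (- a') * IG a' B t = t powr (- a' - 1) * exp (- B / t)"
  using assms Gamma_real_pos[of a', THEN less_imp_neq, symmetric] by (simp add: IG_def powr_minus field_simps)

lemma IG_shift:
  assumes "1 < a'" "0 < B"
  shows "t * IG a' B t = B / (a' - 1) * IG (a' - 1) B t"
proof (cases "0 < t")
  case True
  have "a' - 1 \<notin> \<int>\<^sub>\<le>\<^sub>0"
    using assms nonpos_Ints_nonpos by fastforce
  then have "Gamma a' = (a' - 1) * Gamma (a' - 1)"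
    using Gamma_plus1[of "a' - 1"] by simp
  moreover have "B powr a' = B * B powr (a' - 1)" "t * t powr (- a' - 1) = t powr (- (a' - 1) - 1)"
    using assms True by (simp_all add: powr_add[symmetric] powr_mult_base)
  ultimately show ?thesis
    using True by (simp add: IG_def)
qed (simp add: IG_def)

lemma has_integral_IG:
  assumes "0 < a'" "0 < B"
  shows "(IG a' B has_integral 1) UNIV"
proof -
  have "((\<lambda>t. B powr a' / Gamma a' * t powr (- a' - 1) * exp (- B / t)) has_integral 1) {0<..}"
    using has_integral_mult_right[OF has_integral_powr_exp_inverse[OF assms], of "B powr a' / Gamma a'"]
      assms Gamma_real_pos[of a', THEN less_imp_neq, symmetric]
    by (simp add: powr_minus mult.assoc)
  then show ?thesis
    by (subst (asm) has_integral_restrict_UNIV[symmetric]) (simp add: IG_def[abs_def])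
qed

lemma has_integral_IG_mean:
  assumes "1 < a'" "0 < B"
  shows "((\<lambda>t. t * IG a' B t) has_integral B / (a' - 1)) UNIV"
  using has_integral_mult_right[OF has_integral_IG[of "a' - 1" B], of "B / (a' - 1)"] assms
  by (simp add: IG_shift)

section \<open>Kernel times prior\<close>

lemma Beta_1_left:
  fixes y :: real
  assumes "0 < y"
  shows "Beta 1 y = 1 / y"
proof -
  have "Gamma (1 + y) = y * Gamma y"
    using Gamma_plus1[of y] nonpos_Ints_nonpos[of y] assms by (auto simp: add.commute)
  then show ?thesis
    using Gamma_real_pos[OF assms] by (simp add: Beta_def)
qed

lemma EB_reflect: "EB x h a b u = EB (- x) h (- b) (- a) (- u)"
  unfolding EB_def by (simp add: Beta_commute algebra_simps)

lemma EB_left_endpoint: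
  assumes "a < u" "u < b" "0 < h"
  shows "EB a h a b u = (1 + 1 / h) / (b - a) * ((b - u) / (b - a)) powr (1 / h)"
proof -
  have "(b - a) powr (1 + 1 / h) = (b - a) * (b - a) powr (1 / h)"
    using assms by (simp add: powr_add)
  moreover have "Beta 1 (1 + 1 / h) = 1 / (1 + 1 / h)"
    using assms by (simp add: Beta_1_left add_pos_pos)
  ultimately show ?thesis
    using assms by (simp add: EB_def zpow_def powr_divide)
qed

lemma EB_right_endpoint:
  assumes "a < u" "u < b" "0 < h"
  shows "EB b h a b u = (1 + 1 / h) / (b - a) * ((u - a) / (b - a)) powr (1 / h)"
  using EB_left_endpoint[of "- b" "- u" "- a" h] assms by (simp add: EB_reflect[of b])

lemma boundary_kernel_mult_IG:
  assumes "0 < \<alpha>" "0 < r" "0 < t" and E_pos: "0 < \<beta> - ln r"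
  shows "(1 + 1 / t) / c * r powr (1 / t) * IG \<alpha> \<beta> t
    = (\<beta> powr \<alpha> / c * Gamma \<alpha> * (\<beta> - ln r) powr (- \<alpha>) * IG \<alpha> (\<beta> - ln r) t
       + \<beta> powr \<alpha> / c * Gamma (\<alpha> + 1) * (\<beta> - ln r) powr (- \<alpha> - 1) * IG (\<alpha> + 1) (\<beta> - ln r) t)
      / Gamma \<alpha>" (is "?lhs = ?rhs")
proof -
  define E where "E = \<beta> - ln r"
  have n1: "Gamma \<alpha> * E powr (- \<alpha>) * IG \<alpha> E t = t powr (- \<alpha> - 1) * exp (- E / t)"
    using IG_normalization[of \<alpha> E t] assms by (simp add: E_def)
  have n2: "Gamma (\<alpha> + 1) * E powr (- \<alpha> - 1) * IG (\<alpha> + 1) E t = t powr (- \<alpha> - 1) / t * exp (- E / t)"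
    using IG_normalization[of "\<alpha> + 1" E t, unfolded minus_add_distrib] powr_diff[of t "- \<alpha> - 1" 1] assms
    by (simp add: E_def)
  have "?rhs = \<beta> powr \<alpha> / c * (Gamma \<alpha> * E powr (- \<alpha>) * IG \<alpha> E t
      + Gamma (\<alpha> + 1) * E powr (- \<alpha> - 1) * IG (\<alpha> + 1) E t) / Gamma \<alpha>"
    unfolding E_def by (simp add: algebra_simps)
  also have "\<dots> = \<beta> powr \<alpha> / c * (t powr (- \<alpha> - 1) + t powr (- \<alpha> - 1) / t) * exp (- E / t) / Gamma \<alpha>"
    unfolding n1 n2 by (simp add: algebra_simps)
  also have "exp (- E / t) = r powr (1 / t) * exp (- \<beta> / t)"
    using assms by (simp add: E_def powr_def diff_divide_distrib exp_add[symmetric])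
  also have "\<beta> powr \<alpha> / c * (t powr (- \<alpha> - 1) + t powr (- \<alpha> - 1) / t) * (r powr (1 / t) * exp (- \<beta> / t))
      / Gamma \<alpha> = ?lhs"
    using assms by (simp add: IG_def algebra_simps add_divide_distrib)
  finally show ?thesis ..
qed

lemma interior_kernel_mult_IG:
  assumes "1 / 2 < \<alpha>" "0 < K" "0 < t" and B_pos: "0 < \<beta> - s"
  shows "(1 + t) * t powr (- 1 / 2) / sqrt K * exp (s / t) * IG \<alpha> \<beta> t
    = (K powr (- 1 / 2) * \<beta> powr \<alpha> * Gamma (\<alpha> + 1 / 2) * (\<beta> - s) powr (- \<alpha> - 1 / 2)
         * IG (\<alpha> + 1 / 2) (\<beta> - s) t
       + K powr (- 1 / 2) * \<beta> powr \<alpha> * Gamma (\<alpha> - 1 / 2) * (\<beta> - s) powr (- \<alpha> + 1 / 2)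
         * IG (\<alpha> - 1 / 2) (\<beta> - s) t)
      / Gamma \<alpha>" (is "?lhs = ?rhs")
proof -
  define B where "B = \<beta> - s"
  have "?rhs = K powr (- 1 / 2) * \<beta> powr \<alpha> * (Gamma (\<alpha> + 1 / 2) * B powr (- (\<alpha> + 1 / 2)) * IG (\<alpha> + 1 / 2) B t
      + Gamma (\<alpha> - 1 / 2) * B powr (- (\<alpha> - 1 / 2)) * IG (\<alpha> - 1 / 2) B t) / Gamma \<alpha>"
    unfolding B_def by (simp add: algebra_simps)
  also have "\<dots> = K powr (- 1 / 2) * \<beta> powr \<alpha>
      * (t powr (- (\<alpha> + 1 / 2) - 1) + t powr (- (\<alpha> - 1 / 2) - 1)) * exp (- B / t) / Gamma \<alpha>"
    using IG_normalization[of "\<alpha> + 1 / 2" B t] IG_normalization[of "\<alpha> - 1 / 2" B t] assms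
    by (simp add: B_def algebra_simps)
  also have "t powr (- (\<alpha> + 1 / 2) - 1) + t powr (- (\<alpha> - 1 / 2) - 1)
      = (1 + t) * t powr (- 1 / 2) * t powr (- \<alpha> - 1)"
    using assms by (simp add: powr_add[symmetric] powr_mult_base distrib_right)
  also have "exp (- B / t) = exp (s / t) * exp (- \<beta> / t)"
    by (simp add: B_def diff_divide_distrib exp_add[symmetric])
  also have "K powr (- 1 / 2) * \<beta> powr \<alpha> * ((1 + t) * t powr (- 1 / 2) * t powr (- \<alpha> - 1))
      * (exp (s / t) * exp (- \<beta> / t)) / Gamma \<alpha> = ?lhs"
    using assms by (simp add: IG_def powr_minus_divide powr_half_sqrt ac_simps)
  finally show ?thesis ..
qed

text \<open>The two logarithms are weighted so that their linear upper bounds \<open>ln y \<le> y - 1\<close> cancel.\<close>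
lemma Bq_pos:
  assumes "a < x" "x < b" "a < u" "u < b" "0 < \<beta>"
  shows "0 < Bq \<alpha> \<beta> a b x u"
proof -
  have "(x - a) * ln ((u - a) / (x - a)) \<le> (x - a) * ((u - a) / (x - a) - 1)"
    using assms by (intro mult_left_mono ln_le_minus_one) auto
  also have "\<dots> = u - x"
    using assms by (simp add: field_simps)
  finally have left: "(x - a) * ln ((u - a) / (x - a)) \<le> u - x" .
  have "(b - x) * ln ((b - u) / (b - x)) \<le> (b - x) * ((b - u) / (b - x) - 1)"
    using assms by (intro mult_left_mono ln_le_minus_one) auto
  also have "\<dots> = x - u"
    using assms by (simp add: field_simps)
  finally have right: "(b - x) * ln ((b - u) / (b - x)) \<le> x - u" .
  from left right have "((x - a) * ln ((u - a) / (x - a)) + (b - x) * ln ((b - u) / (b - x))) / (b - a) \<le> 0"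
    using assms by (intro divide_nonpos_pos) auto
  then show ?thesis
    using assms unfolding Bq_def by linarith
qed

lemma kappa_mult_IG:
  assumes "a < b" "a \<le> x" "x \<le> b" "a < u" "u < b" "0 < t" "1 / 2 < \<alpha>" "0 < \<beta>"
  shows "kappa a b x t u * IG \<alpha> \<beta> t = Mq \<alpha> \<beta> a b x u t / Gamma \<alpha>"
proof -
  consider "x = a" | "x = b" | "a < x" "x < b"
    using assms by fastforce
  then show ?thesis
  proof cases
    case 1
    have "ln ((b - u) / (b - a)) < 0"
      using assms by (simp add: divide_simps)
    with assms have "0 < \<beta> - ln ((b - u) / (b - a))"
      by linarith
    from boundary_kernel_mult_IG[of \<alpha> "(b - u) / (b - a)" t \<beta> "b - a", OF _ _ _ this] show ?thesis
      using 1 assms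
      by (simp add: kappa_def EB_left_endpoint Mq_def Fq_def Hq_def Eq_def)
  next
    case 2
    have "ln ((u - a) / (b - a)) < 0"
      using assms by (simp add: divide_simps)
    with assms have "0 < \<beta> - ln ((u - a) / (b - a))"
      by linarith
    from boundary_kernel_mult_IG[of \<alpha> "(u - a) / (b - a)" t \<beta> "b - a", OF _ _ _ this] show ?thesis
      using 2 assms
      by (simp add: kappa_def EB_right_endpoint Mq_def Jq_def Kq_def Gq_def)
  next
    case 3
    let ?s = "((x - a) * ln ((u - a) / (x - a)) + (b - x) * ln ((b - u) / (b - x))) / (b - a)"
    have "EBt x t a b u = (1 + t) * t powr (- 1 / 2) / sqrt (2 * pi * (x - a) * (b - x)) * exp (?s / t)"
      using 3 assms by (simp add: EBt_def)
    moreover have "0 < \<beta> - ?s"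
      using Bq_pos[of a x b u \<beta> \<alpha>] 3 assms by (simp add: Bq_def)
    ultimately show ?thesis
      using 3 assms interior_kernel_mult_IG[of \<alpha> "2 * pi * (x - a) * (b - x)" t \<beta> ?s]
      by (simp add: kappa_def Mq_def Aq_def Cq_def Bq_def)
  qed
qed

lemma has_integral_IG_mixture:
  assumes "1 < a1" "1 < a2" "0 < B"
  shows "((\<lambda>t. p * IG a1 B t + q * IG a2 B t) has_integral p + q) UNIV"
    and "((\<lambda>t. t * (p * IG a1 B t + q * IG a2 B t)) has_integral B * (p / (a1 - 1) + q / (a2 - 1))) UNIV"
proof -
  show "((\<lambda>t. p * IG a1 B t + q * IG a2 B t) has_integral p + q) UNIV"
    using has_integral_add[OF has_integral_mult_right[OF has_integral_IG] has_integral_mult_right[OF has_integral_IG]]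
      assms by fastforce
  have "((\<lambda>t. p * (t * IG a1 B t) + q * (t * IG a2 B t))
      has_integral p * (B / (a1 - 1)) + q * (B / (a2 - 1))) UNIV"
    using assms by (intro has_integral_add has_integral_mult_right has_integral_IG_mean)
  then show "((\<lambda>t. t * (p * IG a1 B t + q * IG a2 B t)) has_integral B * (p / (a1 - 1) + q / (a2 - 1))) UNIV"
    by (simp add: algebra_simps)
qed

lemma Mq_eq_IG_mixture:
  assumes "a < b" "a \<le> x" "x \<le> b" "a < u" "u < b" "3 / 2 < \<alpha>" "0 < \<beta>"
  obtains p q a1 a2 B where "1 < a1" "1 < a2" "0 < B"
    and "Mq \<alpha> \<beta> a b x u = (\<lambda>t. p * IG a1 B t + q * IG a2 B t)"
    and "wq \<alpha> \<beta> a b x u = p + q"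
    and "muq \<alpha> \<beta> a b x u = B * (p / (a1 - 1) + q / (a2 - 1))"
proof -
  consider "x = a" | "x = b" "x \<noteq> a" | "a < x" "x < b"
    using assms by fastforce
  then show thesis
  proof cases
    case 1
    have "ln ((b - u) / (b - a)) < 0"
      using assms by (simp add: divide_simps)
    with assms have "0 < Eq \<alpha> \<beta> a b x u"
      unfolding Eq_def by linarith
    with 1 assms show thesis
      by (intro that[of \<alpha> "\<alpha> + 1" "Eq \<alpha> \<beta> a b x u" "Fq \<alpha> \<beta> a b x u" "Hq \<alpha> \<beta> a b x u"])
        (auto simp: Mq_def wq_def muq_def)
  next
    case 2
    have "ln ((u - a) / (b - a)) < 0"
      using assms by (simp add: divide_simps)
    with assms have "0 < Gq \<alpha> \<beta> a b x u"
      unfolding Gq_def by linarith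
    with 2 assms show thesis
      by (intro that[of \<alpha> "\<alpha> + 1" "Gq \<alpha> \<beta> a b x u" "Jq \<alpha> \<beta> a b x u" "Kq \<alpha> \<beta> a b x u"])
        (auto simp: Mq_def wq_def muq_def)
  next
    case 3
    with assms show thesis
      by (intro that[of "\<alpha> + 1 / 2" "\<alpha> - 1 / 2" "Bq \<alpha> \<beta> a b x u" "Aq \<alpha> \<beta> a b x u" "Cq \<alpha> \<beta> a b x u"])
        (auto simp: Mq_def wq_def muq_def Bq_pos)
  qed
qed

lemma has_integral_Mq:
  assumes "a < b" "a \<le> x" "x \<le> b" "a < u" "u < b" "3 / 2 < \<alpha>" "0 < \<beta>"
  shows "(Mq \<alpha> \<beta> a b x u has_integral wq \<alpha> \<beta> a b x u) UNIV"
    and "((\<lambda>t. t * Mq \<alpha> \<beta> a b x u t) has_integral muq \<alpha> \<beta> a b x u) UNIV"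
proof -
  obtain p q a1 a2 B where "1 < a1" "1 < a2" "0 < B"
    and "Mq \<alpha> \<beta> a b x u = (\<lambda>t. p * IG a1 B t + q * IG a2 B t)"
    and "wq \<alpha> \<beta> a b x u = p + q"
    and "muq \<alpha> \<beta> a b x u = B * (p / (a1 - 1) + q / (a2 - 1))"
    using Mq_eq_IG_mixture[OF assms] .
  with has_integral_IG_mixture[of a1 a2 B p q] show
    "(Mq \<alpha> \<beta> a b x u has_integral wq \<alpha> \<beta> a b x u) UNIV"
    "((\<lambda>t. t * Mq \<alpha> \<beta> a b x u t) has_integral muq \<alpha> \<beta> a b x u) UNIV"
    by simp_all
qed

lemma Mq_nonneg: "a < b \<Longrightarrow> 1 / 2 < \<alpha> \<Longrightarrow> 0 \<le> Mq \<alpha> \<beta> a b x u t"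
  by (simp add: Mq_def Aq_def Cq_def Fq_def Hq_def Jq_def Kq_def IG_nonneg)

lemma Mq_nonpos_eq_0: "t \<le> 0 \<Longrightarrow> Mq \<alpha> \<beta> a b x u t = 0"
  by (simp add: Mq_def IG_nonpos_eq_0)

lemma Mq_measurable [measurable]: "Mq \<alpha> \<beta> a b x u \<in> borel_measurable borel"
  unfolding Mq_def by measurable

section \<open>The posterior\<close>

lemma fhat_loo_mult_prior:
  fixes a b \<beta> h :: "real^'d" and X :: "nat \<Rightarrow> real^'d"
  assumes "\<forall>l. a$l < b$l"
    and "\<forall>l. a$l \<le> X i $ l \<and> X i $ l \<le> b$l"
    and "\<forall>j\<in>{1..n} - {i}. \<forall>l. a$l < X j $ l \<and> X j $ l < b$l"
    and "1 / 2 < \<alpha>" and "\<forall>l. 0 < \<beta>$l" and "h \<in> orthant"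
  shows "fhat_loo n X i a b h * prior \<alpha> \<beta> h
    = (\<Sum>j\<in>{1..n} - {i}. \<Prod>l\<in>UNIV. Mq \<alpha> (\<beta>$l) (a$l) (b$l) (X i $ l) (X j $ l) (h$l))
      / ((real n - 1) * Gamma \<alpha> ^ CARD('d))"
proof -
  have kernel: "kappa (a$l) (b$l) (X i $ l) (h$l) (X j $ l) * IG \<alpha> (\<beta>$l) (h$l)
      = Mq \<alpha> (\<beta>$l) (a$l) (b$l) (X i $ l) (X j $ l) (h$l) / Gamma \<alpha>" if "j \<in> {1..n} - {i}" for j l
    using that assms by (intro kappa_mult_IG) (auto simp: orthant_def)
  have "fhat_loo n X i a b h * prior \<alpha> \<beta> h
      = 1 / (real n - 1) * (\<Sum>j\<in>{1..n} - {i}. \<Prod>l\<in>UNIV.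
          kappa (a$l) (b$l) (X i $ l) (h$l) (X j $ l) * IG \<alpha> (\<beta>$l) (h$l))"
    by (simp add: fhat_loo_def prior_def sum_distrib_right prod.distrib)
  also have "\<dots> = 1 / (real n - 1) * (\<Sum>j\<in>{1..n} - {i}. \<Prod>l\<in>UNIV.
          Mq \<alpha> (\<beta>$l) (a$l) (b$l) (X i $ l) (X j $ l) (h$l) / Gamma \<alpha>)"
    by (simp add: kernel)
  finally show ?thesis
    by (simp add: prod_dividef sum_divide_distrib mult.commute)
qed

lemma integral_posterior_numerator:
  assumes "\<forall>h\<in>orthant. fhat_loo n X i a b h * prior \<alpha> \<beta> h = F h / c"
    and "(F has_integral D) orthant"
  shows "integral orthant (\<lambda>g. fhat_loo n X i a b g * prior \<alpha> \<beta> g) = D / c"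
proof -
  have "integral orthant (\<lambda>g. fhat_loo n X i a b g * prior \<alpha> \<beta> g) = integral orthant (\<lambda>g. F g / c)"
    using assms(1) by (intro integral_cong) simp
  also have "\<dots> = D / c"
    using assms(2) by (intro integral_unique has_integral_divide)
  finally show ?thesis .
qed

lemma posterior_eq:
  assumes "\<forall>h\<in>orthant. fhat_loo n X i a b h * prior \<alpha> \<beta> h = F h / c" and "c \<noteq> 0"
    and "(F has_integral D) orthant" and "h \<in> orthant"
  shows "posterior n X i a b \<alpha> \<beta> h = F h / D"
  using assms integral_posterior_numerator[OF assms(1,3)] by (simp add: posterior_def)

lemma posterior_mean_eq:
  assumes "\<forall>h\<in>orthant. fhat_loo n X i a b h * prior \<alpha> \<beta> h = F h / c" and "c \<noteq> 0"
    and "(F has_integral D) orthant" and "((\<lambda>h. h$m * F h) has_integral Q) orthant"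
  shows "posterior_mean n X i a b \<alpha> \<beta> m = Q / D"
proof -
  have "posterior_mean n X i a b \<alpha> \<beta> m = integral orthant (\<lambda>h. h$m * F h / D)"
    unfolding posterior_mean_def using posterior_eq[OF assms(1-3)] by (intro integral_cong) simp
  also have "\<dots> = Q / D"
    using assms(4) by (intro integral_unique has_integral_divide)
  finally show ?thesis .
qed

theorem theorem1:
  fixes a b \<beta> :: "real^'d" and X :: "nat \<Rightarrow> real^'d" and n i :: nat and \<alpha> :: real
  assumes ab: "\<forall>l. a$l < b$l"
    and n2: "n \<ge> 2"
    and i_in: "i \<in> {1..n}"
    and X_in: "\<forall>j\<in>{1..n}. \<forall>l. a$l \<le> X j $ l \<and> X j $ l \<le> b$l"
    and X_int: "\<forall>j\<in>{1..n} - {i}. \<forall>l. a$l < X j $ l \<and> X j $ l < b$l"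
    and alpha: "\<alpha> > 3 / 2"
    and beta: "\<forall>l. \<beta>$l > 0"
  shows "let D = (\<Sum>j\<in>{1..n} - {i}. \<Prod>l\<in>UNIV. wq \<alpha> (\<beta>$l) (a$l) (b$l) (X i $ l) (X j $ l)) in
           (\<forall>h\<in>orthant. posterior n X i a b \<alpha> \<beta> h
               = (\<Sum>j\<in>{1..n} - {i}. \<Prod>l\<in>UNIV. Mq \<alpha> (\<beta>$l) (a$l) (b$l) (X i $ l) (X j $ l) (h$l)) / D)
         \<and> (\<forall>m. posterior_mean n X i a b \<alpha> \<beta> m
               = (\<Sum>j\<in>{1..n} - {i}. (\<Prod>l\<in>UNIV - {m}. wq \<alpha> (\<beta>$l) (a$l) (b$l) (X i $ l) (X j $ l))
                    * muq \<alpha> (\<beta>$m) (a$m) (b$m) (X i $ m) (X j $ m)) / D)"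
proof -
  define S where "S = {1..n} - {i}"
  define M where "M j l = Mq \<alpha> (\<beta>$l) (a$l) (b$l) (X i $ l) (X j $ l)" for j l
  define w where "w j l = wq \<alpha> (\<beta>$l) (a$l) (b$l) (X i $ l) (X j $ l)" for j l
  define \<mu> where "\<mu> j l = muq \<alpha> (\<beta>$l) (a$l) (b$l) (X i $ l) (X j $ l)" for j l
  have X_i: "\<forall>l. a$l \<le> X i $ l \<and> X i $ l \<le> b$l"
    using X_in i_in by blast
  have numerator: "\<forall>h\<in>orthant. fhat_loo n X i a b h * prior \<alpha> \<beta> h
      = (\<Sum>j\<in>S. \<Prod>l\<in>UNIV. M j l (h$l)) / ((real n - 1) * Gamma \<alpha> ^ CARD('d))"
    using fhat_loo_mult_prior[OF ab X_i X_int] alpha beta by (simp add: S_def M_def)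
  have "0 < Gamma \<alpha>"
    using alpha by simp
  with n2 have normalizer: "(real n - 1) * Gamma \<alpha> ^ CARD('d) \<noteq> 0"
    by simp
  have "((\<lambda>h. \<Sum>j\<in>S. \<Prod>l\<in>UNIV. M j l (h$l)) has_integral (\<Sum>j\<in>S. \<Prod>l\<in>UNIV. w j l)) orthant"
    "((\<lambda>h. h$m * (\<Sum>j\<in>S. \<Prod>l\<in>UNIV. M j l (h$l)))
        has_integral (\<Sum>j\<in>S. (\<Prod>l\<in>UNIV - {m}. w j l) * \<mu> j m)) orthant" for m
    by (rule has_integral_sum_prod_orthant[where \<mu> = \<mu>];
        use ab X_i X_int alpha beta in \<open>auto simp: S_def M_def w_def \<mu>_def Mq_nonneg Mq_nonpos_eq_0 has_integral_Mq\<close>)+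
  from posterior_eq[OF numerator normalizer this(1)] posterior_mean_eq[OF numerator normalizer this]
  show ?thesis
    by (simp add: S_def M_def w_def \<mu>_def)
qed

end
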